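(* On the set of persistence diagrams all of whose points have strictly positive coordinates, let $A\sim A'$ iff $A=cA'$ for some $c>0$. Then $D_S([A],[B]):=\overline{d_S}(\log A,\log B)$ is well defined on equivalence classes (independent of representatives) and is a metric on the set of equivalence classes.
   Context: A persistence diagram here is a finite multiset of points $(a_x,a_y)$ with $0<a_x<a_y<\infty$, together with the diagonal $\Delta$ of infinite multiplicity. $cA=\{(ca_x,ca_y)\}$ for $c>0$. $\log A=\{(\log a_x,\log a_y): a\in A\}$ (a finite multiset of points above the diagonal, plus the diagonal). For such multisets and $s\in\mathbb{R}$, $A+s=\{(a_x+s,a_y+s)\}$. The bottleneck distance $d_\infty(A,B)$ is the infimum over multi-bijections between $A\cup\Delta$ and $B\cup\Delta$ of the maximal $\ell^\infty$ matching distance. The shift-invariant bottleneck distance is $\overline{d_S}(A,B)=\inf_{s\in\mathbb{R}}d_\infty(A+s,B)$. *)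

theory Defs
  imports "HOL-Analysis.Analysis" "HOL-Library.Multiset"
begin

type_synonym pt = "real \<times> real"

text \<open>Persistence diagrams with strictly positive coordinates: finite multisets of
  points (x,y) with 0 < x < y (the diagonal, of infinite multiplicity, is implicit).\<close>
definition PD :: "pt multiset set" where
  "PD = {A. \<forall>p\<in>#A. 0 < fst p \<and> fst p < snd p}"

definition scaleD :: "real \<Rightarrow> pt multiset \<Rightarrow> pt multiset" where
  "scaleD c A = image_mset (\<lambda>(x, y). (c * x, c * y)) A"

definition logD :: "pt multiset \<Rightarrow> pt multiset" where
  "logD A = image_mset (\<lambda>(x, y). (ln x, ln y)) A"

definition shiftD :: "real \<Rightarrow> pt multiset \<Rightarrow> pt multiset" where
  "shiftD s A = image_mset (\<lambda>(x, y). (x + s, y + s)) A"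

definition on_diag :: "pt \<Rightarrow> bool" where
  "on_diag p \<longleftrightarrow> fst p = snd p"

definition linf :: "pt \<Rightarrow> pt \<Rightarrow> real" where
  "linf p q = max \<bar>fst p - fst q\<bar> \<bar>snd p - snd q\<bar>"

text \<open>A (finite part of a) multi-bijection between A \<union> \<Delta> and B \<union> \<Delta>:
  a finite multiset of matched pairs, each side being a point of the diagram or a
  diagonal point, such that every off-diagonal point of A (resp. B) is used exactly
  with its multiplicity. The remaining (infinitely many) diagonal points are matched
  identically, at cost 0.\<close>
definition is_matching :: "pt multiset \<Rightarrow> pt multiset \<Rightarrow> (pt \<times> pt) multiset \<Rightarrow> bool" where
  "is_matching A B M \<longleftrightarrow>
     filter_mset (\<lambda>p. \<not> on_diag p) (image_mset fst M) = A \<and>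
     filter_mset (\<lambda>q. \<not> on_diag q) (image_mset snd M) = B"

definition match_cost :: "(pt \<times> pt) multiset \<Rightarrow> real" where
  "match_cost M = Max (insert 0 ((\<lambda>(p, q). linf p q) ` set_mset M))"

definition bottleneck :: "pt multiset \<Rightarrow> pt multiset \<Rightarrow> real" where
  "bottleneck A B = Inf {match_cost M | M. is_matching A B M}"

definition dS_bar :: "pt multiset \<Rightarrow> pt multiset \<Rightarrow> real" where
  "dS_bar A B = (INF s. bottleneck (shiftD s A) B)"

definition scale_rel :: "(pt multiset \<times> pt multiset) set" where
  "scale_rel = {(A, A'). A \<in> PD \<and> A' \<in> PD \<and> (\<exists>c>0. A = scaleD c A')}"

definition PDclasses :: "pt multiset set set" where
  "PDclasses = PD // scale_rel"

text \<open>D_S on equivalence classes, via chosen representatives (0 outside the classes)\<close>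
definition D_S :: "pt multiset set \<Rightarrow> pt multiset set \<Rightarrow> real" where
  "D_S X Y = (if X \<in> PDclasses \<and> Y \<in> PDclasses
              then dS_bar (logD (SOME A. A \<in> X)) (logD (SOME B. B \<in> Y)) else 0)"

end

theory Submission
  imports Defs
begin

text \<open>Scaling a diagram by c > 0 translates its logarithm by ln c, and the bottleneck
  distance is invariant under translating both arguments; hence the shift-invariant distance of
  the logarithms does not depend on the representatives, and it inherits symmetry and the
  triangle inequality from the bottleneck distance. For definiteness, the coordinate differences
  between points of two finite diagrams form a finite set, so below a threshold fixed by its gaps
  and by the persistences of the points, a matching of a translate of P with Q can neither use
  the diagonal nor move points by different amounts: it is a global translation. Distance 0
  therefore forces log B to be a translate of log A, i.e. B to be a rescaling of A.\<close>

definition above_diagonal :: "pt multiset \<Rightarrow> bool" where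
  "above_diagonal P \<longleftrightarrow> (\<forall>p\<in>#P. fst p < snd p)"

lemma above_diagonal_filter_not_on_diag: "above_diagonal P \<Longrightarrow> filter_mset (\<lambda>p. \<not> on_diag p) P = P"
  unfolding above_diagonal_def on_diag_def by (force simp: filter_mset_eq_conv)

lemma match_cost_le_iff:
  "match_cost M \<le> e \<longleftrightarrow> 0 \<le> e \<and> (\<forall>(p, q)\<in>#M. linf p q \<le> e)"
  unfolding match_cost_def by auto

lemma match_cost_less_iff:
  "match_cost M < e \<longleftrightarrow> 0 < e \<and> (\<forall>(p, q)\<in>#M. linf p q < e)"
  unfolding match_cost_def by auto

lemma match_cost_nonneg: "0 \<le> match_cost M"
  unfolding match_cost_def by simp

lemma linf_triangle: "linf a c \<le> linf a b + linf b c"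
  unfolding linf_def by (auto simp: max_def abs_if)

lemma linf_commute: "linf a b = linf b a"
  unfolding linf_def by (simp add: abs_minus_commute)

lemma linf_to_diag: "on_diag d \<Longrightarrow> (snd p - fst p) / 2 \<le> linf p d"
  unfolding linf_def on_diag_def by (auto simp: max_def abs_if)

lemma is_matching_to_diagonal:
  assumes "above_diagonal A" "above_diagonal B"
  shows "is_matching A B (image_mset (\<lambda>p. (p, (0, 0))) A + image_mset (\<lambda>q. ((0, 0), q)) B)"
  using above_diagonal_filter_not_on_diag[OF assms(1)] above_diagonal_filter_not_on_diag[OF assms(2)]
  unfolding is_matching_def by (auto simp: on_diag_def multiset.map_comp o_def)

lemma is_matching_compose:
  assumes "is_matching A B M1" "is_matching B C M2" "match_cost M1 \<le> e1" "match_cost M2 \<le> e2"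
  shows "\<exists>M. is_matching A C M \<and> match_cost M \<le> e1 + e2"
  using assms
proof (induction B arbitrary: A C M1 M2)
  case empty
  then have "is_matching A C (M1 + M2)"
    unfolding is_matching_def by simp
  moreover have "match_cost (M1 + M2) \<le> e1 + e2"
    using empty.prems(3,4) by (fastforce simp: match_cost_le_iff intro: add_increasing add_increasing2)
  ultimately show ?case by blast
next
  case (add b B)
  have "b \<in># filter_mset (\<lambda>q. \<not> on_diag q) (image_mset snd M1)"
    using add.prems(1) unfolding is_matching_def by simp
  then obtain a where ab: "(a, b) \<in># M1" and b: "\<not> on_diag b" by auto
  have "b \<in># filter_mset (\<lambda>q. \<not> on_diag q) (image_mset fst M2)"
    using add.prems(2) unfolding is_matching_def by simp
  then obtain c where bc: "(b, c) \<in># M2" by auto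
  define M1' where "M1' = M1 - {#(a, b)#}"
  define M2' where "M2' = M2 - {#(b, c)#}"
  have M1: "M1 = add_mset (a, b) M1'" and M2: "M2 = add_mset (b, c) M2'"
    using ab bc unfolding M1'_def M2'_def by simp_all
  define A' where "A' = filter_mset (\<lambda>q. \<not> on_diag q) (image_mset fst M1')"
  define C' where "C' = filter_mset (\<lambda>q. \<not> on_diag q) (image_mset snd M2')"
  have "is_matching A' B M1'" "is_matching B C' M2'"
    using add.prems(1,2) b unfolding is_matching_def A'_def C'_def M1 M2 by simp_all
  moreover have "match_cost M1' \<le> e1" "match_cost M2' \<le> e2"
    using add.prems(3,4) unfolding M1 M2 match_cost_le_iff by simp_all
  ultimately obtain M' where M': "is_matching A' C' M'" "match_cost M' \<le> e1 + e2"
    using add.IH by blast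
  have "is_matching A C (add_mset (a, c) M')"
    using add.prems(1,2) M'(1) unfolding is_matching_def M1 M2 A'_def C'_def by auto
  moreover have "linf a c \<le> e1 + e2"
    using linf_triangle[of a c b] add.prems(3,4) unfolding M1 M2 match_cost_le_iff by simp
  ultimately show ?case
    using M'(2) by (intro exI[of _ "add_mset (a, c) M'"]) (simp add: match_cost_le_iff)
qed

lemma bottleneck_eq_INF: "bottleneck A B = (INF M\<in>{M. is_matching A B M}. match_cost M)"
  unfolding bottleneck_def by (rule arg_cong[where f = Inf]) auto

lemma bottleneck_le_match_cost: "is_matching A B M \<Longrightarrow> bottleneck A B \<le> match_cost M"
  unfolding bottleneck_eq_INF
  by (rule cINF_lower) (auto intro: bdd_belowI[of _ 0] match_cost_nonneg)

lemma bottleneck_nonneg: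
  "above_diagonal A \<Longrightarrow> above_diagonal B \<Longrightarrow> 0 \<le> bottleneck A B"
  unfolding bottleneck_eq_INF using is_matching_to_diagonal
  by (intro cINF_greatest) (auto intro: match_cost_nonneg)

lemma le_cINF_add:
  fixes f g :: "'a \<Rightarrow> real"
  assumes "X \<noteq> {}" "Y \<noteq> {}" "\<And>x y. x \<in> X \<Longrightarrow> y \<in> Y \<Longrightarrow> c \<le> f x + g y"
  shows "c \<le> (INF x\<in>X. f x) + (INF y\<in>Y. g y)"
proof -
  have "c - f x \<le> (INF y\<in>Y. g y)" if "x \<in> X" for x
    using assms(2,3) that by (intro cINF_greatest) (auto simp: algebra_simps)
  then have "c - (INF y\<in>Y. g y) \<le> (INF x\<in>X. f x)"
    using assms(1) by (intro cINF_greatest) (auto simp: algebra_simps)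
  then show ?thesis by simp
qed

lemma bottleneck_triangle:
  assumes "above_diagonal A" "above_diagonal B" "above_diagonal C"
  shows "bottleneck A C \<le> bottleneck A B + bottleneck B C"
  unfolding bottleneck_eq_INF[of A B] bottleneck_eq_INF[of B C]
proof (rule le_cINF_add)
  show "{M. is_matching A B M} \<noteq> {}" "{M. is_matching B C M} \<noteq> {}"
    using is_matching_to_diagonal assms by blast+
  fix M1 M2 assume "M1 \<in> {M. is_matching A B M}" "M2 \<in> {M. is_matching B C M}"
  then obtain M where "is_matching A C M" "match_cost M \<le> match_cost M1 + match_cost M2"
    using is_matching_compose by blast
  then show "bottleneck A C \<le> match_cost M1 + match_cost M2"
    using bottleneck_le_match_cost order_trans by blast
qed

lemma bottleneck_map_le:
  assumes "above_diagonal A" "above_diagonal B"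
    and "\<And>p. on_diag (f p) \<longleftrightarrow> on_diag p" "\<And>p q. linf (f p) (f q) = linf p q"
  shows "bottleneck (image_mset f A) (image_mset f B) \<le> bottleneck A B"
  unfolding bottleneck_eq_INF[of A B]
proof (rule cINF_greatest)
  show "{M. is_matching A B M} \<noteq> {}"
    using is_matching_to_diagonal assms(1,2) by blast
  fix M assume "M \<in> {M. is_matching A B M}"
  then have "is_matching (image_mset f A) (image_mset f B) (image_mset (map_prod f f) M)"
    using assms(3) unfolding is_matching_def
    by (auto simp: multiset.map_comp o_def filter_mset_image_mset)
  moreover have "match_cost (image_mset (map_prod f f) M) = match_cost M"
    unfolding match_cost_def using assms(4) by (simp add: image_image split_beta)
  ultimately show "bottleneck (image_mset f A) (image_mset f B) \<le> match_cost M"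
    using bottleneck_le_match_cost by metis
qed

definition shift_pt :: "real \<Rightarrow> pt \<Rightarrow> pt" where
  "shift_pt s p = (fst p + s, snd p + s)"

lemma shiftD_eq_image: "shiftD s A = image_mset (shift_pt s) A"
  unfolding shiftD_def shift_pt_def by (rule image_mset_cong) (auto simp: split_beta)

lemma shiftD_shiftD: "shiftD a (shiftD b A) = shiftD (b + a) A"
  unfolding shiftD_eq_image shift_pt_def by (simp add: multiset.map_comp o_def add.assoc)

lemma shiftD_0 [simp]: "shiftD 0 A = A"
  unfolding shiftD_eq_image shift_pt_def by simp

lemma above_diagonal_shiftD: "above_diagonal A \<Longrightarrow> above_diagonal (shiftD s A)"
  unfolding above_diagonal_def shiftD_eq_image shift_pt_def by auto

lemma bottleneck_shiftD_le:
  "above_diagonal A \<Longrightarrow> above_diagonal B \<Longrightarrow>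
    bottleneck (shiftD u A) (shiftD u B) \<le> bottleneck A B"
  unfolding shiftD_eq_image
  by (rule bottleneck_map_le) (auto simp: shift_pt_def on_diag_def linf_def)

lemma bottleneck_shiftD:
  assumes "above_diagonal A" "above_diagonal B"
  shows "bottleneck (shiftD u A) (shiftD u B) = bottleneck A B"
proof (rule antisym)
  have "bottleneck A B = bottleneck (shiftD (-u) (shiftD u A)) (shiftD (-u) (shiftD u B))"
    by (simp add: shiftD_shiftD)
  also have "\<dots> \<le> bottleneck (shiftD u A) (shiftD u B)"
    using assms by (intro bottleneck_shiftD_le above_diagonal_shiftD)
  finally show "bottleneck A B \<le> bottleneck (shiftD u A) (shiftD u B)" .
qed (use assms bottleneck_shiftD_le in blast)

lemma bottleneck_commute:
  assumes "above_diagonal A" "above_diagonal B"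
  shows "bottleneck A B = bottleneck B A"
proof -
  have swap: "bottleneck B A \<le> bottleneck A B"
    if "above_diagonal A" "above_diagonal B" for A B
    unfolding bottleneck_eq_INF[of A B]
  proof (rule cINF_greatest)
    show "{M. is_matching A B M} \<noteq> {}"
      using is_matching_to_diagonal that by blast
    fix M assume "M \<in> {M. is_matching A B M}"
    then have "is_matching B A (image_mset prod.swap M)"
      unfolding is_matching_def by (simp add: multiset.map_comp o_def)
    moreover have "match_cost (image_mset prod.swap M) = match_cost M"
      unfolding match_cost_def by (simp add: image_image split_beta linf_commute)
    ultimately show "bottleneck B A \<le> match_cost M"
      using bottleneck_le_match_cost by metis
  qed
  show ?thesis
    using swap[OF assms] swap[OF assms(2,1)] by simp
qed

lemma bottleneck_self [simp]: "above_diagonal A \<Longrightarrow> bottleneck A A = 0"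
proof (rule antisym)
  assume "above_diagonal A"
  then have "is_matching A A (image_mset (\<lambda>p. (p, p)) A)"
    unfolding is_matching_def by (simp add: multiset.map_comp o_def above_diagonal_filter_not_on_diag)
  moreover have "match_cost (image_mset (\<lambda>p. (p, p)) A) = 0"
    unfolding match_cost_def by (simp add: image_image linf_def image_constant_conv)
  ultimately show "bottleneck A A \<le> 0"
    using bottleneck_le_match_cost by metis
qed (rule bottleneck_nonneg)

lemma INF_surj_reindex: "surj g \<Longrightarrow> (INF x. f (g x)) = (INF y. f y)"
  by (metis image_image)

lemma dS_bar_le_bottleneck:
  "above_diagonal P \<Longrightarrow> above_diagonal Q \<Longrightarrow> dS_bar P Q \<le> bottleneck (shiftD s P) Q"
  unfolding dS_bar_def
  by (rule cINF_lower) (auto intro!: bdd_belowI[of _ 0] bottleneck_nonneg above_diagonal_shiftD)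

lemma dS_bar_nonneg: "above_diagonal P \<Longrightarrow> above_diagonal Q \<Longrightarrow> 0 \<le> dS_bar P Q"
  unfolding dS_bar_def
  by (rule cINF_greatest) (auto intro!: bottleneck_nonneg above_diagonal_shiftD)

lemma dS_bar_self [simp]: "above_diagonal P \<Longrightarrow> dS_bar P P = 0"
  using dS_bar_le_bottleneck[of P P 0] dS_bar_nonneg[of P P] by simp

lemma dS_bar_shiftD_left: "dS_bar (shiftD u P) Q = dS_bar P Q"
proof -
  have "surj (\<lambda>s. u + s)"
    by (metis add.commute diff_add_cancel surj_def)
  then show ?thesis
    unfolding dS_bar_def shiftD_shiftD by (rule INF_surj_reindex)
qed

lemma bottleneck_shiftD_right:
  assumes "above_diagonal P" "above_diagonal Q"
  shows "bottleneck (shiftD s P) (shiftD u Q) = bottleneck (shiftD (s - u) P) Q"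
proof -
  have "bottleneck (shiftD s P) (shiftD u Q) = bottleneck (shiftD u (shiftD (s - u) P)) (shiftD u Q)"
    by (simp add: shiftD_shiftD)
  also have "\<dots> = bottleneck (shiftD (s - u) P) Q"
    using assms by (intro bottleneck_shiftD above_diagonal_shiftD)
  finally show ?thesis .
qed

lemma dS_bar_shiftD_right:
  assumes "above_diagonal P" "above_diagonal Q"
  shows "dS_bar P (shiftD u Q) = dS_bar P Q"
proof -
  have "surj (\<lambda>s. s - u)"
    by (metis add_diff_cancel surj_def)
  then show ?thesis
    unfolding dS_bar_def bottleneck_shiftD_right[OF assms] by (rule INF_surj_reindex)
qed

lemma dS_bar_commute:
  assumes "above_diagonal P" "above_diagonal Q"
  shows "dS_bar P Q = dS_bar Q P"
proof -
  have "bottleneck (shiftD s P) Q = bottleneck (shiftD (- s) Q) P" for s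
    using bottleneck_shiftD_right[OF assms(2,1), of 0 s] assms
    by (simp add: bottleneck_commute above_diagonal_shiftD)
  moreover have "surj (uminus :: real \<Rightarrow> real)"
    by (metis minus_minus surj_def)
  ultimately show ?thesis
    unfolding dS_bar_def by (simp add: INF_surj_reindex[of uminus "\<lambda>s. bottleneck (shiftD s Q) P"])
qed

lemma dS_bar_triangle:
  assumes "above_diagonal P" "above_diagonal Q" "above_diagonal R"
  shows "dS_bar P R \<le> dS_bar P Q + dS_bar Q R"
  unfolding dS_bar_def[of P Q] dS_bar_def[of Q R]
proof (rule le_cINF_add)
  fix s t
  have "dS_bar P R \<le> bottleneck (shiftD (s + t) P) R"
    using assms(1,3) by (rule dS_bar_le_bottleneck)
  also have "\<dots> \<le> bottleneck (shiftD (s + t) P) (shiftD t Q) + bottleneck (shiftD t Q) R"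
    using assms by (intro bottleneck_triangle above_diagonal_shiftD)
  also have "bottleneck (shiftD (s + t) P) (shiftD t Q) = bottleneck (shiftD s P) Q"
    using assms by (simp add: bottleneck_shiftD_right)
  finally show "dS_bar P R \<le> bottleneck (shiftD s P) Q + bottleneck (shiftD t Q) R" .
qed auto

lemma finite_pos_lower_bound:
  fixes S :: "real set"
  assumes "finite S" "\<forall>x\<in>S. 0 < x"
  shows "\<exists>e>0. \<forall>x\<in>S. e \<le> x"
proof (intro exI conjI ballI)
  show "0 < Min (insert 1 S)"
    using assms by (simp add: Min_gr_iff)
  show "Min (insert 1 S) \<le> x" if "x \<in> S" for x
    using assms(1) that by simp
qed

lemma finite_separated:
  fixes V :: "real set"
  assumes "finite V"
  shows "\<exists>e>0. \<forall>v\<in>V. \<forall>w\<in>V. \<bar>v - w\<bar> < e \<longrightarrow> v = w"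
proof -
  let ?gaps = "(\<lambda>(v, w). \<bar>v - w\<bar>) ` {(v, w)\<in>V \<times> V. v \<noteq> w}"
  have "finite {(v, w)\<in>V \<times> V. v \<noteq> w}"
    by (rule finite_subset[OF _ finite_cartesian_product[OF assms assms]]) auto
  moreover have "\<forall>x\<in>?gaps. 0 < x"
    by auto
  ultimately obtain e where e: "0 < e" "\<forall>x\<in>?gaps. e \<le> x"
    using finite_pos_lower_bound[of ?gaps] by blast
  have "v = w" if "v \<in> V" "w \<in> V" "\<bar>v - w\<bar> < e" for v w
  proof (rule ccontr)
    assume "v \<noteq> w"
    then have "e \<le> \<bar>v - w\<bar>"
      using e(2) that(1,2) by fastforce
    with that(3) show False by simp
  qed
  with e(1) show ?thesis by blast
qed

lemma matching_avoids_diagonal: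
  assumes M: "is_matching A B M" "match_cost M < e"
    and pers: "\<forall>p\<in>#A + B. 2 * e \<le> snd p - fst p"
  shows "\<exists>N. N \<subseteq># M \<and> image_mset fst N = A \<and> image_mset snd N = B"
proof -
  have far: "e \<le> linf p d" if "p \<in># A + B" "on_diag d" for p d
    using pers that linf_to_diag[of d p] by fastforce
  have same_side: "on_diag p \<longleftrightarrow> on_diag q" if pq: "(p, q) \<in># M" for p q
  proof -
    have "linf p q < e"
      using M(2) pq by (auto simp: match_cost_less_iff)
    moreover have "p \<in># A" if "\<not> on_diag p"
      using M(1) pq that unfolding is_matching_def by force
    moreover have "q \<in># B" if "\<not> on_diag q"
      using M(1) pq that unfolding is_matching_def by force
    ultimately show ?thesis
      using far[of p q] far[of q p] by (auto simp: linf_commute)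
  qed
  define N where "N = filter_mset (\<lambda>x. \<not> on_diag (fst x)) M"
  have "N = filter_mset (\<lambda>x. \<not> on_diag (snd x)) M"
    unfolding N_def using same_side by (auto intro: filter_mset_cong0)
  then have "image_mset fst N = A \<and> image_mset snd N = B"
    using M(1) unfolding is_matching_def N_def by (simp add: filter_mset_image_mset)
  then show ?thesis
    unfolding N_def by (metis multiset_filter_subset)
qed

definition coord_diffs :: "pt multiset \<Rightarrow> pt multiset \<Rightarrow> real set" where
  "coord_diffs P Q = (\<Union>p\<in>set_mset P. \<Union>q\<in>set_mset Q. {fst q - fst p, snd q - snd p})"

lemma finite_coord_diffs: "finite (coord_diffs P Q)"
  unfolding coord_diffs_def by auto

lemma close_matching_is_shift:
  assumes N: "image_mset fst N = shiftD s P" "image_mset snd N = Q"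
    and close: "\<forall>(p, q)\<in>#N. linf p q < e"
    and sep: "\<forall>v\<in>coord_diffs P Q. \<forall>w\<in>coord_diffs P Q. \<bar>v - w\<bar> < 2 * e \<longrightarrow> v = w"
  shows "\<exists>t. Q = shiftD t P"
proof -
  obtain t where t: "\<forall>v\<in>coord_diffs P Q. \<bar>v - s\<bar> < e \<longrightarrow> v = t"
  proof (cases "\<exists>v\<in>coord_diffs P Q. \<bar>v - s\<bar> < e")
    case True
    then obtain v0 where "v0 \<in> coord_diffs P Q" "\<bar>v0 - s\<bar> < e" by blast
    then show ?thesis
      using sep by (intro that[of v0]) (auto simp: abs_less_iff)
  qed blast
  have "snd x = shift_pt (t - s) (fst x)" if x: "x \<in># N" for x
  proof -
    obtain p where p: "p \<in># P" "fst x = shift_pt s p"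
      using N(1) x unfolding shiftD_eq_image by (metis image_eqI imageE set_image_mset)
    have q: "snd x \<in># Q"
      using N(2) x by force
    have "\<bar>fst (snd x) - fst (fst x)\<bar> < e" "\<bar>snd (snd x) - snd (fst x)\<bar> < e"
      using close x by (auto simp: linf_def abs_minus_commute)
    moreover have "fst (snd x) - fst p \<in> coord_diffs P Q" "snd (snd x) - snd p \<in> coord_diffs P Q"
      using p(1) q unfolding coord_diffs_def by auto
    moreover have "fst (fst x) = fst p + s" "snd (fst x) = snd p + s"
      using p(2) by (simp_all add: shift_pt_def)
    ultimately have "fst (snd x) - fst p = t" "snd (snd x) - snd p = t"
      using t by (smt (verit))+
    then show ?thesis
      using p(2) by (simp add: shift_pt_def prod_eq_iff)
  qed
  then have "Q = shiftD (t - s) (shiftD s P)"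
    unfolding N(1,2)[symmetric] shiftD_eq_image[of "t - s"]
    by (auto simp: multiset.map_comp o_def intro: image_mset_cong)
  then show ?thesis
    by (auto simp: shiftD_shiftD)
qed

lemma bottleneck_small_imp_shift:
  assumes "above_diagonal P" "above_diagonal Q"
  shows "\<exists>e>0. \<forall>s. bottleneck (shiftD s P) Q < e \<longrightarrow> (\<exists>t. Q = shiftD t P)"
proof -
  obtain e1 where e1: "0 < e1" "\<forall>x\<in>(\<lambda>p. snd p - fst p) ` set_mset (P + Q). e1 \<le> x"
    using finite_pos_lower_bound[of "(\<lambda>p. snd p - fst p) ` set_mset (P + Q)"] assms
    by (auto simp: above_diagonal_def)
  obtain e2 where e2: "0 < e2" "\<forall>v\<in>coord_diffs P Q. \<forall>w\<in>coord_diffs P Q. \<bar>v - w\<bar> < e2 \<longrightarrow> v = w"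
    using finite_separated[OF finite_coord_diffs] by blast
  define e where "e = min e1 e2 / 2"
  have "\<exists>t. Q = shiftD t P" if s: "bottleneck (shiftD s P) Q < e" for s
  proof -
    have "{M. is_matching (shiftD s P) Q M} \<noteq> {}"
      using is_matching_to_diagonal assms above_diagonal_shiftD by blast
    then obtain M where M: "is_matching (shiftD s P) Q M" "match_cost M < e"
      using cInf_lessD[OF _ s[unfolded bottleneck_eq_INF]] by blast
    moreover have "\<forall>p\<in>#shiftD s P + Q. 2 * e \<le> snd p - fst p"
      using e1(2) unfolding e_def by (force simp: shiftD_eq_image shift_pt_def)
    ultimately obtain N where N: "N \<subseteq># M" "image_mset fst N = shiftD s P" "image_mset snd N = Q"
      using matching_avoids_diagonal by blast
    moreover have "\<forall>(p, q)\<in>#N. linf p q < e"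
      using M(2) N(1) unfolding match_cost_less_iff by (meson mset_subset_eqD)
    moreover have "\<forall>v\<in>coord_diffs P Q. \<forall>w\<in>coord_diffs P Q. \<bar>v - w\<bar> < 2 * e \<longrightarrow> v = w"
      using e2(2) unfolding e_def by auto
    ultimately show ?thesis
      using close_matching_is_shift by blast
  qed
  moreover have "0 < e"
    using e1(1) e2(1) unfolding e_def by simp
  ultimately show ?thesis by blast
qed

lemma dS_bar_eq_0_imp_shift:
  assumes "above_diagonal P" "above_diagonal Q" "dS_bar P Q = 0"
  shows "\<exists>t. Q = shiftD t P"
proof -
  obtain e where "0 < e" and e: "\<And>s. bottleneck (shiftD s P) Q < e \<Longrightarrow> \<exists>t. Q = shiftD t P"
    using bottleneck_small_imp_shift[OF assms(1,2)] by blast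
  then obtain s where "bottleneck (shiftD s P) Q < e"
    using cInf_lessD[of "range (\<lambda>s. bottleneck (shiftD s P) Q)" e] assms(3)
    unfolding dS_bar_def by auto
  then show ?thesis by (rule e)
qed

lemma scaleD_scaleD: "scaleD a (scaleD b A) = scaleD (a * b) A"
  unfolding scaleD_def multiset.map_comp o_def
  by (rule image_mset_cong) (auto simp: split_beta mult.assoc)

lemma scaleD_1 [simp]: "scaleD 1 A = A"
  unfolding scaleD_def by (simp add: split_beta)

lemma PD_scaleD: "A \<in> PD \<Longrightarrow> 0 < c \<Longrightarrow> scaleD c A \<in> PD"
  unfolding PD_def scaleD_def by auto

lemma logD_scaleD:
  assumes "A \<in> PD" "0 < c"
  shows "logD (scaleD c A) = shiftD (ln c) (logD A)"
  unfolding logD_def scaleD_def shiftD_def multiset.map_comp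
proof (rule image_mset_cong)
  fix p assume "p \<in># A"
  then have "0 < fst p" "0 < snd p"
    using assms(1) unfolding PD_def by auto
  then show "((\<lambda>(x, y). (ln x, ln y)) \<circ> (\<lambda>(x, y). (c * x, c * y))) p =
      ((\<lambda>(x, y). (x + ln c, y + ln c)) \<circ> (\<lambda>(x, y). (ln x, ln y))) p"
    using assms(2) by (cases p) (simp add: ln_mult)
qed

lemma above_diagonal_logD: "A \<in> PD \<Longrightarrow> above_diagonal (logD A)"
  unfolding PD_def above_diagonal_def logD_def by auto

lemma logD_inject:
  assumes "A \<in> PD" "B \<in> PD" "logD A = logD B"
  shows "A = B"
proof -
  have exp_logD: "image_mset (map_prod exp exp) (logD C) = C" if "C \<in> PD" for C
  proof -
    have "image_mset (map_prod exp exp \<circ> (\<lambda>(x, y). (ln x, ln y))) C = image_mset id C"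
      using that unfolding PD_def by (intro image_mset_cong) auto
    then show ?thesis
      unfolding logD_def multiset.map_comp by simp
  qed
  show ?thesis
    using exp_logD[OF assms(1)] exp_logD[OF assms(2)] assms(3) by metis
qed

lemma equiv_scale_rel: "equiv PD scale_rel"
proof (rule equivI)
  show "refl_on PD scale_rel"
    unfolding refl_on_def scale_rel_def by (auto intro!: exI[of _ 1])
  show "sym scale_rel"
    unfolding sym_def scale_rel_def
  proof clarsimp
    fix A c assume "0 < (c::real)"
    then show "\<exists>c'>0. A = scaleD c' (scaleD c A)"
      by (intro exI[of _ "1 / c"]) (simp add: scaleD_scaleD)
  qed
  show "trans scale_rel"
    unfolding trans_def scale_rel_def by (auto simp: scaleD_scaleD) (metis mult_pos_pos)
qed (auto simp: scale_rel_def)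

lemma scale_rel_imp_logD_shift:
  "(A, A') \<in> scale_rel \<Longrightarrow> \<exists>u. logD A = shiftD u (logD A')"
  unfolding scale_rel_def using logD_scaleD by auto

lemma dS_bar_logD_scale_rel:
  assumes "(A, A') \<in> scale_rel" "(B, B') \<in> scale_rel"
  shows "dS_bar (logD A) (logD B) = dS_bar (logD A') (logD B')"
proof -
  obtain u v where "logD A = shiftD u (logD A')" "logD B = shiftD v (logD B')"
    using scale_rel_imp_logD_shift assms by blast
  moreover have "above_diagonal (logD A')" "above_diagonal (logD B')"
    using assms above_diagonal_logD unfolding scale_rel_def by auto
  ultimately show ?thesis
    by (simp add: dS_bar_shiftD_left dS_bar_shiftD_right)
qed

lemma dS_bar_logD_eq_0_imp_scale_rel:
  assumes "A \<in> PD" "B \<in> PD" "dS_bar (logD A) (logD B) = 0"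
  shows "(B, A) \<in> scale_rel"
proof -
  obtain t where "logD B = shiftD t (logD A)"
    using dS_bar_eq_0_imp_shift above_diagonal_logD assms by blast
  then have "logD B = logD (scaleD (exp t) A)"
    using logD_scaleD[OF assms(1), of "exp t"] by simp
  then have "B = scaleD (exp t) A"
    using logD_inject assms(1,2) PD_scaleD by (metis exp_gt_zero)
  then show ?thesis
    unfolding scale_rel_def using assms(1,2) by (auto intro!: exI[of _ "exp t"])
qed

lemma some_in_PDclass: "X \<in> PDclasses \<Longrightarrow> (SOME A. A \<in> X) \<in> X"
  using in_quotient_imp_non_empty[OF equiv_scale_rel] unfolding PDclasses_def
  by (meson ex_in_conv someI_ex)

lemma PDclass_subset_PD: "X \<in> PDclasses \<Longrightarrow> X \<subseteq> PD"
  using in_quotient_imp_subset[OF equiv_scale_rel] unfolding PDclasses_def .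

lemma above_diagonal_logD_some: "X \<in> PDclasses \<Longrightarrow> above_diagonal (logD (SOME A. A \<in> X))"
  using some_in_PDclass PDclass_subset_PD above_diagonal_logD by blast

lemma D_S_eq_dS_bar_logD:
  assumes "X \<in> PDclasses" "Y \<in> PDclasses" "A \<in> X" "B \<in> Y"
  shows "D_S X Y = dS_bar (logD A) (logD B)"
proof -
  have "(SOME A. A \<in> X, A) \<in> scale_rel" "(SOME B. B \<in> Y, B) \<in> scale_rel"
    using in_quotient_imp_in_rel[OF equiv_scale_rel] assms some_in_PDclass
    unfolding PDclasses_def by blast+
  then show ?thesis
    unfolding D_S_def using assms(1,2) dS_bar_logD_scale_rel by simp
qed

lemma Metric_space_PDclasses: "Metric_space PDclasses D_S"
proof
  fix X Y
  show "0 \<le> D_S X Y"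
    unfolding D_S_def by (simp add: dS_bar_nonneg above_diagonal_logD_some)
  show "D_S X Y = D_S Y X"
    unfolding D_S_def by (metis dS_bar_commute above_diagonal_logD_some)
next
  fix X Y assume XY: "X \<in> PDclasses" "Y \<in> PDclasses"
  obtain A B where AB: "A \<in> X" "B \<in> Y"
    using XY some_in_PDclass by blast
  have "A \<in> PD" "B \<in> PD"
    using XY AB PDclass_subset_PD by blast+
  show "D_S X Y = 0 \<longleftrightarrow> X = Y"
  proof
    assume "D_S X Y = 0"
    then have "(B, A) \<in> scale_rel"
      using D_S_eq_dS_bar_logD[OF XY AB] dS_bar_logD_eq_0_imp_scale_rel \<open>A \<in> PD\<close> \<open>B \<in> PD\<close>
      by simp
    then show "X = Y"
      using quotient_eq_iff[OF equiv_scale_rel, of Y X B A] XY AB unfolding PDclasses_def by simp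
  next
    assume "X = Y"
    then show "D_S X Y = 0"
      using D_S_eq_dS_bar_logD[OF XY(1,1) AB(1,1)] \<open>A \<in> PD\<close> by (simp add: above_diagonal_logD)
  qed
next
  fix X Y Z assume XYZ: "X \<in> PDclasses" "Y \<in> PDclasses" "Z \<in> PDclasses"
  obtain A B C where ABC: "A \<in> X" "B \<in> Y" "C \<in> Z"
    using XYZ some_in_PDclass by blast
  then have "A \<in> PD" "B \<in> PD" "C \<in> PD"
    using XYZ PDclass_subset_PD by blast+
  then show "D_S X Z \<le> D_S X Y + D_S Y Z"
    using D_S_eq_dS_bar_logD XYZ ABC by (simp add: dS_bar_triangle above_diagonal_logD)
qed

theorem mainTheorem3:
  shows "equiv PD scale_rel
    \<and> (\<forall>A\<in>PD. \<forall>A'\<in>PD. \<forall>B\<in>PD. \<forall>B'\<in>PD.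
          (A, A') \<in> scale_rel \<longrightarrow> (B, B') \<in> scale_rel \<longrightarrow>
          dS_bar (logD A) (logD B) = dS_bar (logD A') (logD B'))
    \<and> (\<forall>X\<in>PDclasses. \<forall>Y\<in>PDclasses. \<forall>A\<in>X. \<forall>B\<in>Y. D_S X Y = dS_bar (logD A) (logD B))
    \<and> Metric_space PDclasses D_S"
  using equiv_scale_rel dS_bar_logD_scale_rel D_S_eq_dS_bar_logD Metric_space_PDclasses
  by blast

end
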